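(* Let $s_1^\pm,s_2^\pm\in\mathbb{R}^3$ satisfy $$|s_1^+-s_1^-|+|s_2^+-s_2^-|\le|s_1^+-s_2^-|+|s_2^+-s_1^-|,$$ and for $m=1,2$ let $L_m$ be the closed segment joining $s_m^+$ and $s_m^-$. Then $$\operatorname{dist}(L_1,L_2)\ge\frac1{\sqrt2}\min_{m\ne n}\operatorname{dist}(s_m^\pm,L_n),$$ where the minimum is over $m\neq n$ in $\{1,2\}$ and both choices of sign. *)

theory Defs
  imports "HOL-Analysis.Analysis"
begin

end

theory Submission
  imports Defs
begin

text \<open>
  Let \<open>p \<in> L\<^sub>1\<close> and \<open>q \<in> L\<^sub>2\<close> realise \<open>h = dist(L\<^sub>1, L\<^sub>2)\<close>. If \<open>p\<close> or \<open>q\<close> is an endpoint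
  we are done. Otherwise \<open>p - q\<close> is orthogonal to both segments, so
  \<open>L\<^sub>1 = [p - \<alpha> u, p + \<beta> u]\<close> and \<open>L\<^sub>2 = [q - \<gamma> v, q + \<eta> v]\<close> with unit vectors \<open>u, v\<close>;
  put \<open>k = u \<bullet> v\<close>. Comparing with the foot point \<open>q + \<sigma> k v\<close>, the point \<open>p + \<sigma> u\<close> has
  squared distance at most \<open>h\<^sup>2 + \<sigma>\<^sup>2 (1 - k\<^sup>2)\<close> from \<open>L\<^sub>2\<close> whenever \<open>\<bar>\<sigma>\<bar> \<le> \<gamma>, \<eta>\<close>.
  If \<open>m\<close> is the least of \<open>\<alpha>, \<beta>, \<gamma>, \<eta>\<close>, then \<open>m\<^sup>2 (1 - k\<^sup>2) \<le> h\<^sup>2\<close>: otherwise each of the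
  two cross distances \<open>\<bar>s\<^sub>1\<^sup>+ - s\<^sub>2\<^sup>-\<bar>\<close>, \<open>\<bar>s\<^sub>2\<^sup>+ - s\<^sub>1\<^sup>-\<bar>\<close> would be strictly shorter than the
  sum of the two pieces it joins, contradicting the hypothesis. Hence the endpoint at
  distance \<open>m\<close> from \<open>p\<close> or \<open>q\<close> is within \<open>\<surd>2 h\<close> of the other segment.
\<close>

lemma norm_add_orthogonal_units_sq:
  fixes w u v :: "'a::real_inner"
  assumes "norm u = 1" "norm v = 1" "inner w u = 0" "inner w v = 0"
  shows "(norm (w + x *\<^sub>R u + y *\<^sub>R v))\<^sup>2 = (norm w)\<^sup>2 + x\<^sup>2 + y\<^sup>2 + 2 * x * y * inner u v"
proof -
  have "inner u u = 1" "inner v v = 1"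
    using assms(1,2) by (simp_all add: power2_norm_eq_inner[symmetric])
  with assms(3,4) show ?thesis
    unfolding power2_norm_eq_inner
    by (simp add: inner_commute power2_eq_square algebra_simps)
qed

lemma norm_add_orthogonal_units_less:
  fixes w u v :: "'a::real_inner"
  assumes "norm u = 1" "norm v = 1" "inner w u = 0" "inner w v = 0"
    and "0 \<le> m" "m \<le> x" "m \<le> y" and "(norm w)\<^sup>2 < m\<^sup>2 * (1 - (inner u v)\<^sup>2)"
  shows "norm (w + x *\<^sub>R u + y *\<^sub>R v) < x + y"
proof -
  define k where "k = inner u v"
  have "\<bar>k\<bar> \<le> 1"
    using Cauchy_Schwarz_ineq2[of u v] assms(1,2) by (simp add: k_def)
  then have "0 \<le> 1 - k" "0 \<le> 1 + k" "1 + k \<le> 2" by auto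
  have "m\<^sup>2 \<le> x * y"
    using assms(5-7) by (metis mult_mono order_trans power2_eq_square)
  have "(norm w)\<^sup>2 < m\<^sup>2 * ((1 - k) * (1 + k))"
    using assms(8) by (simp add: k_def power2_eq_square algebra_simps)
  also have "\<dots> \<le> x * y * ((1 - k) * 2)"
    using \<open>m\<^sup>2 \<le> x * y\<close> \<open>0 \<le> 1 - k\<close> \<open>0 \<le> 1 + k\<close> \<open>1 + k \<le> 2\<close> assms(5)
    by (intro mult_mono) (auto intro: order_trans[OF zero_le_power2])
  finally have "(norm (w + x *\<^sub>R u + y *\<^sub>R v))\<^sup>2 < (x + y)\<^sup>2"
    unfolding norm_add_orthogonal_units_sq[OF assms(1-4)] k_def
    by (simp add: power2_eq_square algebra_simps)
  then show ?thesis
    using assms(5-7) by (auto intro: power2_less_imp_less)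
qed

lemma infdist_segment_sq_le:
  fixes p q u v :: "'a::real_inner"
  assumes "norm u = 1" "norm v = 1" "inner (p - q) u = 0" "inner (p - q) v = 0"
    and "\<bar>\<sigma>\<bar> \<le> \<gamma>" "\<bar>\<sigma>\<bar> \<le> \<eta>"
  shows "(infdist (p + \<sigma> *\<^sub>R u) (closed_segment (q - \<gamma> *\<^sub>R v) (q + \<eta> *\<^sub>R v)))\<^sup>2
         \<le> (norm (p - q))\<^sup>2 + \<sigma>\<^sup>2 * (1 - (inner u v)\<^sup>2)"
proof -
  define k where "k = inner u v"
  have "\<bar>k\<bar> \<le> 1"
    using Cauchy_Schwarz_ineq2[of u v] assms(1,2) by (simp add: k_def)
  then have "\<bar>\<sigma> * k\<bar> \<le> \<bar>\<sigma>\<bar>"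
    by (simp add: abs_mult mult_left_le)
  define f where "f = q + (\<sigma> * k) *\<^sub>R v"
  have "f \<in> closed_segment (q - \<gamma> *\<^sub>R v) (q + \<eta> *\<^sub>R v)"
  proof (cases "\<gamma> + \<eta> = 0")
    case True
    with assms(5,6) have "\<gamma> = 0" "\<eta> = 0" "\<sigma> = 0" by auto
    then show ?thesis by (simp add: f_def)
  next
    case False
    define \<mu> where "\<mu> = (\<gamma> + \<sigma> * k) / (\<gamma> + \<eta>)"
    have "0 < \<gamma> + \<eta>"
      using False assms(5,6) by linarith
    then have "0 \<le> \<mu>" "\<mu> \<le> 1"
      using \<open>\<bar>\<sigma> * k\<bar> \<le> \<bar>\<sigma>\<bar>\<close> assms(5,6) by (auto simp: \<mu>_def field_simps)
    moreover have "(1 - \<mu>) *\<^sub>R (q - \<gamma> *\<^sub>R v) + \<mu> *\<^sub>R (q + \<eta> *\<^sub>R v) = q + (\<mu> * (\<gamma> + \<eta>) - \<gamma>) *\<^sub>R v"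
      by (simp add: algebra_simps)
    moreover have "\<mu> * (\<gamma> + \<eta>) - \<gamma> = \<sigma> * k"
      using \<open>0 < \<gamma> + \<eta>\<close> by (simp add: \<mu>_def)
    ultimately have "0 \<le> \<mu> \<and> \<mu> \<le> 1 \<and> f = (1 - \<mu>) *\<^sub>R (q - \<gamma> *\<^sub>R v) + \<mu> *\<^sub>R (q + \<eta> *\<^sub>R v)"
      by (simp add: f_def)
    then show ?thesis
      by (auto simp: in_segment)
  qed
  then have "infdist (p + \<sigma> *\<^sub>R u) (closed_segment (q - \<gamma> *\<^sub>R v) (q + \<eta> *\<^sub>R v))
             \<le> norm ((p - q) + \<sigma> *\<^sub>R u + (- \<sigma> * k) *\<^sub>R v)"
    using infdist_le by (fastforce simp: dist_norm f_def algebra_simps)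
  moreover have "(norm ((p - q) + \<sigma> *\<^sub>R u + (- \<sigma> * k) *\<^sub>R v))\<^sup>2 = (norm (p - q))\<^sup>2 + \<sigma>\<^sup>2 * (1 - k\<^sup>2)"
    unfolding norm_add_orthogonal_units_sq[OF assms(1-4)] k_def
    by (simp add: power2_eq_square algebra_simps)
  ultimately show ?thesis
    unfolding k_def by (metis infdist_nonneg power_mono)
qed

lemma infdist_segment_le_sqrt2:
  fixes p q u v :: "'a::real_inner"
  assumes "norm u = 1" "norm v = 1" "inner (p - q) u = 0" "inner (p - q) v = 0"
    and "\<bar>\<sigma>\<bar> \<le> \<gamma>" "\<bar>\<sigma>\<bar> \<le> \<eta>" and "\<sigma>\<^sup>2 * (1 - (inner u v)\<^sup>2) \<le> (norm (p - q))\<^sup>2"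
  shows "infdist (p + \<sigma> *\<^sub>R u) (closed_segment (q - \<gamma> *\<^sub>R v) (q + \<eta> *\<^sub>R v)) \<le> sqrt 2 * norm (p - q)"
proof (rule power2_le_imp_le)
  show "(infdist (p + \<sigma> *\<^sub>R u) (closed_segment (q - \<gamma> *\<^sub>R v) (q + \<eta> *\<^sub>R v)))\<^sup>2 \<le> (sqrt 2 * norm (p - q))\<^sup>2"
    using infdist_segment_sq_le[OF assms(1-6)] assms(7) by (simp add: power_mult_distrib)
qed simp

lemma open_segment_unit_decomp:
  fixes p a b :: "'a::real_normed_vector"
  assumes "p \<in> open_segment a b"
  obtains u \<alpha> \<beta> where "norm u = 1" "0 < \<alpha>" "0 < \<beta>" "a = p - \<alpha> *\<^sub>R u" "b = p + \<beta> *\<^sub>R u"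
proof -
  obtain t where "a \<noteq> b" "0 < t" "t < 1" and p: "p = (1 - t) *\<^sub>R a + t *\<^sub>R b"
    using assms by (auto simp: in_segment)
  define d where "d = norm (b - a)"
  have "0 < d"
    using \<open>a \<noteq> b\<close> by (simp add: d_def)
  show ?thesis
  proof
    show "norm ((1 / d) *\<^sub>R (b - a)) = 1"
      using \<open>0 < d\<close> by (simp add: d_def)
    show "0 < t * d" "0 < (1 - t) * d"
      using \<open>0 < d\<close> \<open>0 < t\<close> \<open>t < 1\<close> by simp_all
    show "a = p - (t * d) *\<^sub>R ((1 / d) *\<^sub>R (b - a))" "b = p + ((1 - t) * d) *\<^sub>R ((1 / d) *\<^sub>R (b - a))"
      using \<open>0 < d\<close> by (simp_all add: p algebra_simps)
  qed
qed

lemma closest_point_open_segment_orthogonal: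
  fixes x p a b :: "'a::real_inner"
  assumes "p \<in> open_segment a b" and closest: "\<forall>z\<in>closed_segment a b. dist x p \<le> dist x z"
  shows "inner (x - p) (b - a) = 0"
proof -
  obtain t where "0 < t" "t < 1" and p: "p = (1 - t) *\<^sub>R a + t *\<^sub>R b"
    using assms(1) by (auto simp: in_segment)
  have "p \<in> closed_segment a b"
    using assms(1) open_closed_segment by blast
  have "inner (x - p) (a - p) \<le> 0" "inner (x - p) (b - p) \<le> 0"
    using any_closest_point_dot[OF convex_closed_segment closed_segment \<open>p \<in> closed_segment a b\<close> _ closest]
    by simp_all
  moreover have "a - p = (- t) *\<^sub>R (b - a)" "b - p = (1 - t) *\<^sub>R (b - a)"
    by (simp_all add: p algebra_simps)
  ultimately have "- t * inner (x - p) (b - a) \<le> 0" "(1 - t) * inner (x - p) (b - a) \<le> 0"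
    by simp_all
  with \<open>0 < t\<close> \<open>t < 1\<close> show ?thesis
    by (simp add: mult_le_0_iff zero_le_mult_iff)
qed

lemma open_segments_endpoint_infdist_le:
  fixes a1 a2 b1 b2 p q :: "'a::real_inner"
  assumes "p \<in> open_segment a1 a2" "q \<in> open_segment b1 b2"
    and "inner (p - q) (a2 - a1) = 0" "inner (p - q) (b2 - b1) = 0"
    and "dist a1 a2 + dist b1 b2 \<le> dist a1 b2 + dist b1 a2"
  shows "Min {infdist a1 (closed_segment b1 b2), infdist a2 (closed_segment b1 b2),
              infdist b1 (closed_segment a1 a2), infdist b2 (closed_segment a1 a2)}
         \<le> sqrt 2 * dist p q"
proof -
  obtain u \<alpha> \<beta> where u: "norm u = 1" and "0 < \<alpha>" "0 < \<beta>"
    and a1: "a1 = p - \<alpha> *\<^sub>R u" and a2: "a2 = p + \<beta> *\<^sub>R u"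
    using open_segment_unit_decomp[OF assms(1)] .
  obtain v \<gamma> \<eta> where v: "norm v = 1" and "0 < \<gamma>" "0 < \<eta>"
    and b1: "b1 = q - \<gamma> *\<^sub>R v" and b2: "b2 = q + \<eta> *\<^sub>R v"
    using open_segment_unit_decomp[OF assms(2)] .
  have a_diff: "a2 - a1 = (\<alpha> + \<beta>) *\<^sub>R u" and b_diff: "b2 - b1 = (\<gamma> + \<eta>) *\<^sub>R v"
    by (simp_all add: a1 a2 b1 b2 algebra_simps)
  then have pu: "inner (p - q) u = 0" and pv: "inner (p - q) v = 0"
    using assms(3,4) \<open>0 < \<alpha>\<close> \<open>0 < \<beta>\<close> \<open>0 < \<gamma>\<close> \<open>0 < \<eta>\<close> by auto
  then have qu: "inner (q - p) u = 0" and qv: "inner (q - p) v = 0"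
    by (simp_all add: inner_diff_left)
  define h where "h = norm (p - q)"
  define k where "k = inner u v"
  define m where "m = min (min \<alpha> \<beta>) (min \<gamma> \<eta>)"
  have "m\<^sup>2 * (1 - k\<^sup>2) \<le> h\<^sup>2"
  proof (rule ccontr)
    assume "\<not> ?thesis"
    then have small: "(norm (q - p))\<^sup>2 < m\<^sup>2 * (1 - k\<^sup>2)" "(norm (p - q))\<^sup>2 < m\<^sup>2 * (1 - k\<^sup>2)"
      by (simp_all add: h_def norm_minus_commute)
    have "0 \<le> m" "m \<le> \<alpha>" "m \<le> \<beta>" "m \<le> \<gamma>" "m \<le> \<eta>"
      using \<open>0 < \<alpha>\<close> \<open>0 < \<beta>\<close> \<open>0 < \<gamma>\<close> \<open>0 < \<eta>\<close> by (auto simp: m_def)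
    then have "norm ((q - p) + \<alpha> *\<^sub>R u + \<eta> *\<^sub>R v) < \<alpha> + \<eta>"
      "norm ((p - q) + \<beta> *\<^sub>R u + \<gamma> *\<^sub>R v) < \<beta> + \<gamma>"
      using norm_add_orthogonal_units_less[OF u v] qu qv pu pv small by (simp_all add: k_def)
    moreover have "b2 - a1 = (q - p) + \<alpha> *\<^sub>R u + \<eta> *\<^sub>R v" "a2 - b1 = (p - q) + \<beta> *\<^sub>R u + \<gamma> *\<^sub>R v"
      by (simp_all add: a1 a2 b1 b2 algebra_simps)
    then have "dist a1 b2 = norm ((q - p) + \<alpha> *\<^sub>R u + \<eta> *\<^sub>R v)"
      "dist b1 a2 = norm ((p - q) + \<beta> *\<^sub>R u + \<gamma> *\<^sub>R v)"
      by (metis dist_commute dist_norm)+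
    moreover have "dist a1 a2 = norm ((\<alpha> + \<beta>) *\<^sub>R u)" "dist b1 b2 = norm ((\<gamma> + \<eta>) *\<^sub>R v)"
      using a_diff b_diff by (metis dist_commute dist_norm)+
    then have "dist a1 a2 = \<alpha> + \<beta>" "dist b1 b2 = \<gamma> + \<eta>"
      using u v \<open>0 < \<alpha>\<close> \<open>0 < \<beta>\<close> \<open>0 < \<gamma>\<close> \<open>0 < \<eta>\<close> by simp_all
    ultimately show False
      using assms(5) by linarith
  qed
  moreover have "m = \<alpha> \<or> m = \<beta> \<or> m = \<gamma> \<or> m = \<eta>"
    by (auto simp: m_def min_def)
  moreover have "m \<le> \<alpha>" "m \<le> \<beta>" "m \<le> \<gamma>" "m \<le> \<eta>"
    by (auto simp: m_def)
  ultimately have "infdist a1 (closed_segment b1 b2) \<le> sqrt 2 * h \<or> infdist a2 (closed_segment b1 b2) \<le> sqrt 2 * h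
      \<or> infdist b1 (closed_segment a1 a2) \<le> sqrt 2 * h \<or> infdist b2 (closed_segment a1 a2) \<le> sqrt 2 * h"
    using infdist_segment_le_sqrt2[OF u v pu pv, of "- \<alpha>" \<gamma> \<eta>] infdist_segment_le_sqrt2[OF u v pu pv, of \<beta> \<gamma> \<eta>]
      infdist_segment_le_sqrt2[OF v u qv qu, of "- \<gamma>" \<alpha> \<beta>] infdist_segment_le_sqrt2[OF v u qv qu, of \<eta> \<alpha> \<beta>]
      \<open>0 < \<alpha>\<close> \<open>0 < \<beta>\<close> \<open>0 < \<gamma>\<close> \<open>0 < \<eta>\<close>
    by (auto simp: a1 a2 b1 b2 h_def k_def inner_commute norm_minus_commute)
  then show ?thesis
    by (auto simp: h_def dist_norm)
qed

theorem lemma5: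
  fixes s1p s1m s2p s2m :: "real ^ 3"
  assumes "dist s1p s1m + dist s2p s2m \<le> dist s1p s2m + dist s2p s1m"
  shows "setdist (closed_segment s1p s1m) (closed_segment s2p s2m) \<ge>
           (1 / sqrt 2) * Min {infdist s1p (closed_segment s2p s2m),
                               infdist s1m (closed_segment s2p s2m),
                               infdist s2p (closed_segment s1p s1m),
                               infdist s2m (closed_segment s1p s1m)}"
    (is "_ \<ge> _ * Min ?S")
proof -
  obtain p q where p: "p \<in> closed_segment s1p s1m" and q: "q \<in> closed_segment s2p s2m"
    and pq: "dist p q = setdist (closed_segment s1p s1m) (closed_segment s2p s2m)"
    using setdist_compact_closed[of "closed_segment s1p s1m" "closed_segment s2p s2m"] by auto
  have "Min ?S \<le> sqrt 2 * dist p q"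
  proof (cases "p \<in> {s1p, s1m} \<or> q \<in> {s2p, s2m}")
    case True
    have "infdist p (closed_segment s2p s2m) \<le> dist p q" "infdist q (closed_segment s1p s1m) \<le> dist p q"
      using infdist_le[OF q, of p] infdist_le[OF p, of q] by (simp_all add: dist_commute)
    with True obtain e where "e \<in> ?S" "e \<le> dist p q"
      by blast
    moreover have "dist p q \<le> sqrt 2 * dist p q"
      by (simp add: mult_le_cancel_right1)
    ultimately show ?thesis
      using Min_le[of ?S e] by simp
  next
    case False
    then have p': "p \<in> open_segment s1p s1m" and q': "q \<in> open_segment s2p s2m"
      using p q by (auto simp: open_segment_def)
    have "\<forall>z\<in>closed_segment s1p s1m. dist q p \<le> dist q z"
      using pq setdist_le_dist[OF _ q] by (simp add: dist_commute)
    then have "inner (q - p) (s1m - s1p) = 0"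
      by (rule closest_point_open_segment_orthogonal[OF p'])
    moreover have "\<forall>z\<in>closed_segment s2p s2m. dist p q \<le> dist p z"
      using pq setdist_le_dist[OF p] by simp
    then have "inner (p - q) (s2m - s2p) = 0"
      by (rule closest_point_open_segment_orthogonal[OF q'])
    ultimately show ?thesis
      using open_segments_endpoint_infdist_le[OF p' q'] assms
      by (simp add: dist_commute inner_diff_left)
  qed
  then have "(1 / sqrt 2) * Min ?S \<le> (1 / sqrt 2) * (sqrt 2 * dist p q)"
    by (intro mult_left_mono) auto
  then show ?thesis
    by (simp add: pq)
qed

end
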